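(* Let $\delta_1,\dots,\delta_k$ be positive real numbers and let $\tilde D_1,\dots,\tilde D_k\in M_n(\mathbb{C})$ be such that each $\tilde D_i$ is a $\delta_i$-generalized row stochastic matrix or a $\delta_i$-generalized column stochastic matrix, with $\|\tilde D_i\|_2=\delta_i$. Let $S_k(\tilde D)=\tilde D_1+\cdots+\tilde D_k$ and $\delta=\delta_1+\cdots+\delta_k$. Then $S_k(\tilde D)$ is a $\delta$-generalized doubly stochastic matrix with $\|S_k(\tilde D)\|_2=\delta$, and for every $m\in\mathbb{N}$ and every block structure $\mathbb{B}\subseteq M_n(\mathbb{C})$, $\mu_{\mathbb{B}}(S_k(\tilde D)^m)=\delta^m$.
   Context: A $\delta$-generalized row (resp. column) stochastic matrix is a square complex matrix all of whose row (resp. column) sums equal $\delta$; it is $\delta$-generalized doubly stochastic if both hold. $\|M\|_2$ denotes the spectral norm. A block structure is a set of the form $\mathbb{B}=\{\operatorname{diag}(\delta_1I_{k_1},\dots,\delta_rI_{k_r},\Delta_1,\dots,\Delta_s)\mid \delta_i\in\mathbb{C},\ \Delta_j\in M_{n_j}(\mathbb{C})\}\subseteq M_n(\mathbb{C})$ for some $r,s\in\mathbb{N}_0$ and positive integers $k_i,n_j$ with $\sum k_i+\sum n_j=n$. The structured singular value is $\mu_{\mathbb{B}}(M)=0$ if $\det(I+M\Delta)\neq0$ for all $\Delta\in\mathbb{B}$, and otherwise $\mu_{\mathbb{B}}(M)=\big(\min\{\|\Delta\|_2\mid \Delta\in\mathbb{B},\ \det(I+M\Delta)=0\}\big)^{-1}$.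 *)

theory Defs
  imports "Jordan_Normal_Form.Determinant" Complex_Main
begin

definition vec_norm2 :: "complex vec \<Rightarrow> real" where
  "vec_norm2 v = sqrt (\<Sum>i<dim_vec v. (cmod (v $ i))\<^sup>2)"

definition spec_norm :: "complex mat \<Rightarrow> real" where
  "spec_norm A = Sup {vec_norm2 (A *\<^sub>v v) | v. v \<in> carrier_vec (dim_col A) \<and> vec_norm2 v \<le> 1}"

definition gen_row_stochastic :: "nat \<Rightarrow> complex \<Rightarrow> complex mat \<Rightarrow> bool" where
  "gen_row_stochastic n d A \<longleftrightarrow> A \<in> carrier_mat n n \<and> (\<forall>i<n. (\<Sum>j<n. A $$ (i, j)) = d)"

definition gen_col_stochastic :: "nat \<Rightarrow> complex \<Rightarrow> complex mat \<Rightarrow> bool" where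
  "gen_col_stochastic n d A \<longleftrightarrow> A \<in> carrier_mat n n \<and> (\<forall>j<n. (\<Sum>i<n. A $$ (i, j)) = d)"

definition gen_doubly_stochastic :: "nat \<Rightarrow> complex \<Rightarrow> complex mat \<Rightarrow> bool" where
  "gen_doubly_stochastic n d A \<longleftrightarrow> gen_row_stochastic n d A \<and> gen_col_stochastic n d A"

definition mat_sum :: "nat \<Rightarrow> nat \<Rightarrow> (nat \<Rightarrow> complex mat) \<Rightarrow> complex mat" where
  "mat_sum n k D = mat n n (\<lambda>(i, j). \<Sum>l<k. D l $$ (i, j))"

(* block structure with scalar block sizes ks = [k_1..k_r] and full block sizes ns = [n_1..n_s]:
   diag(delta_1 I_{k_1}, ..., delta_r I_{k_r}, Delta_1, ..., Delta_s) *)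
definition block_structure :: "nat list \<Rightarrow> nat list \<Rightarrow> complex mat set" where
  "block_structure ks ns =
     {diag_block_mat (map (\<lambda>i. \<delta> i \<cdot>\<^sub>m 1\<^sub>m (ks ! i)) [0..<length ks] @ Ds) | \<delta> Ds.
        length Ds = length ns \<and> (\<forall>j<length ns. Ds ! j \<in> carrier_mat (ns ! j) (ns ! j))}"

definition is_block_structure :: "nat \<Rightarrow> nat list \<Rightarrow> nat list \<Rightarrow> bool" where
  "is_block_structure n ks ns \<longleftrightarrow> (\<forall>x\<in>set ks. 0 < x) \<and> (\<forall>x\<in>set ns. 0 < x)
     \<and> sum_list ks + sum_list ns = n"

definition ssv :: "complex mat set \<Rightarrow> complex mat \<Rightarrow> real" where
  "ssv B M = (if (\<forall>\<Delta>\<in>B. det (1\<^sub>m (dim_row M) + M * \<Delta>) \<noteq> 0) then 0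
     else inverse (Inf {spec_norm \<Delta> | \<Delta>. \<Delta> \<in> B \<and> det (1\<^sub>m (dim_row M) + M * \<Delta>) = 0}))"

end

theory Submission
  imports Defs "Jordan_Normal_Form.Char_Poly" "HOL-Analysis.L2_Norm"
begin

(* A row- or column-stochastic D_i with ||D_i|| = delta_i is automatically doubly stochastic:
   its row sums have mean delta_i, and ||D_i 1|| <= delta_i ||1|| bounds their mean square
   modulus by delta_i^2, which forces every row sum to equal delta_i; the column sums are
   treated alike, testing D_i on the conjugated vector of column sums. Hence S = D_1 + ... + D_k
   is delta-doubly stochastic with ||S|| <= delta, and the all-ones vector is an eigenvector of
   S^m for delta^m, so the spectral radius and the spectral norm of S^m coincide. The structured
   singular value always lies between these two: for an eigenvalue lambda of M, the scalar
   matrix -lambda^-1 I belongs to every block structure and makes I + M Delta singular, while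
   det (I + M Delta) = 0 forces ||M|| ||Delta|| >= 1. *)

lemma vec_norm2_L2_set: "vec_norm2 v = L2_set (\<lambda>i. cmod (v $ i)) {..<dim_vec v}"
  by (simp add: vec_norm2_def L2_set_def)

lemma vec_norm2_nonneg: "0 \<le> vec_norm2 v"
  by (simp add: vec_norm2_L2_set)

lemma vec_norm2_power2: "(vec_norm2 v)\<^sup>2 = (\<Sum>i<dim_vec v. (cmod (v $ i))\<^sup>2)"
  unfolding vec_norm2_def by (simp add: sum_nonneg)

lemma vec_norm2_eq_0_iff: "vec_norm2 v = 0 \<longleftrightarrow> v = 0\<^sub>v (dim_vec v)"
  unfolding vec_norm2_L2_set by (auto simp: L2_set_eq_0_iff intro!: eq_vecI) (metis index_zero_vec(1))

lemma vec_norm2_zero_vec [simp]: "vec_norm2 (0\<^sub>v n) = 0"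
  by (simp add: vec_norm2_def)

lemma vec_norm2_smult: "vec_norm2 (c \<cdot>\<^sub>v v) = cmod c * vec_norm2 v"
  unfolding vec_norm2_L2_set
  by (simp add: L2_set_right_distrib norm_mult) (intro L2_set_cong, auto simp: norm_mult)

lemma vec_norm2_uminus: "vec_norm2 (- v) = vec_norm2 v"
  unfolding vec_norm2_L2_set by simp (intro L2_set_cong, auto)

lemma vec_norm2_add_le:
  assumes "dim_vec u = dim_vec w"
  shows "vec_norm2 (u + w) \<le> vec_norm2 u + vec_norm2 w"
proof -
  have "vec_norm2 (u + w) \<le> L2_set (\<lambda>i. cmod (u $ i) + cmod (w $ i)) {..<dim_vec w}"
    unfolding vec_norm2_L2_set using assms by (auto intro!: L2_set_mono simp: norm_triangle_ineq)
  also have "\<dots> \<le> vec_norm2 u + vec_norm2 w"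
    unfolding vec_norm2_L2_set using assms by (simp add: L2_set_triangle_ineq)
  finally show ?thesis .
qed

lemma norm_sum_vec_le: "cmod (\<Sum>i<dim_vec v. v $ i) \<le> sqrt (dim_vec v) * vec_norm2 v"
proof -
  have "cmod (\<Sum>i<dim_vec v. v $ i) \<le> (\<Sum>i<dim_vec v. \<bar>1\<bar> * \<bar>cmod (v $ i)\<bar>)"
    by (simp add: norm_sum)
  also have "\<dots> \<le> L2_set (\<lambda>_. 1) {..<dim_vec v} * vec_norm2 v"
    unfolding vec_norm2_L2_set by (rule L2_set_mult_ineq)
  finally show ?thesis by (simp add: L2_set_constant)
qed

lemma mult_mat_vec_index_sum:
  "i < dim_row A \<Longrightarrow> dim_vec v = dim_col A \<Longrightarrow> (A *\<^sub>v v) $ i = (\<Sum>j<dim_col A. A $$ (i, j) * v $ j)"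
  by (simp add: scalar_prod_def lessThan_atLeast0)

lemma spec_norm_bdd_above:
  "bdd_above {vec_norm2 (A *\<^sub>v v) | v. v \<in> carrier_vec (dim_col A) \<and> vec_norm2 v \<le> 1}"
proof (rule bdd_aboveI, clarify)
  fix v :: "complex vec"
  assume v: "v \<in> carrier_vec (dim_col A)" "vec_norm2 v \<le> 1"
  have entry_le: "cmod (v $ j) \<le> 1" if "j < dim_col A" for j
  proof -
    have "cmod (v $ j) \<le> vec_norm2 v"
      unfolding vec_norm2_L2_set using v that by (intro member_le_L2_set) auto
    with v show ?thesis by simp
  qed
  have "vec_norm2 (A *\<^sub>v v) \<le> (\<Sum>i<dim_row A. cmod ((A *\<^sub>v v) $ i))"
    unfolding vec_norm2_L2_set dim_mult_mat_vec by (rule L2_set_le_sum) simp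
  also have "\<dots> \<le> (\<Sum>i<dim_row A. \<Sum>j<dim_col A. cmod (A $$ (i, j)))"
  proof (rule sum_mono)
    fix i assume i: "i \<in> {..<dim_row A}"
    have "cmod ((A *\<^sub>v v) $ i) = cmod (\<Sum>j<dim_col A. A $$ (i, j) * v $ j)"
      using i v by (subst mult_mat_vec_index_sum) auto
    also have "\<dots> \<le> (\<Sum>j<dim_col A. cmod (A $$ (i, j) * v $ j))"
      by (rule norm_sum)
    also have "\<dots> \<le> (\<Sum>j<dim_col A. cmod (A $$ (i, j)))"
      using entry_le by (intro sum_mono) (auto simp: norm_mult intro!: mult_left_le)
    finally show "cmod ((A *\<^sub>v v) $ i) \<le> (\<Sum>j<dim_col A. cmod (A $$ (i, j)))" .
  qed
  finally show "vec_norm2 (A *\<^sub>v v) \<le> (\<Sum>i<dim_row A. \<Sum>j<dim_col A. cmod (A $$ (i, j)))" .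
qed

lemma spec_norm_nonneg: "0 \<le> spec_norm A"
proof -
  have zero: "0\<^sub>v (dim_col A) \<in> carrier_vec (dim_col A)" "vec_norm2 (0\<^sub>v (dim_col A)) \<le> 1"
    by simp_all
  have "vec_norm2 (A *\<^sub>v 0\<^sub>v (dim_col A)) \<le> spec_norm A"
    unfolding spec_norm_def by (rule cSup_upper[OF _ spec_norm_bdd_above]) (use zero in blast)
  then show ?thesis by (meson vec_norm2_nonneg order_trans)
qed

lemma spec_norm_mult_vec_le:
  assumes v: "v \<in> carrier_vec (dim_col A)"
  shows "vec_norm2 (A *\<^sub>v v) \<le> spec_norm A * vec_norm2 v"
proof (cases "vec_norm2 v = 0")
  case True
  then have "A *\<^sub>v v = 0\<^sub>v (dim_row A)"
    using v by (auto simp: vec_norm2_eq_0_iff intro!: eq_vecI)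
  then show ?thesis by (simp add: spec_norm_nonneg vec_norm2_nonneg)
next
  case False
  define r where "r = vec_norm2 v"
  have r: "r > 0" using False vec_norm2_nonneg unfolding r_def by (simp add: order_less_le)
  define w where "w = complex_of_real (1 / r) \<cdot>\<^sub>v v"
  have w: "w \<in> carrier_vec (dim_col A)" "vec_norm2 w = 1"
    using v r unfolding w_def r_def by (auto simp: vec_norm2_smult norm_divide)
  have "vec_norm2 (A *\<^sub>v w) \<le> spec_norm A"
    unfolding spec_norm_def by (rule cSup_upper[OF _ spec_norm_bdd_above]) (use w in auto)
  moreover have "A *\<^sub>v w = complex_of_real (1 / r) \<cdot>\<^sub>v (A *\<^sub>v v)"
    unfolding w_def by (rule mult_mat_vec[OF _ v]) auto
  ultimately have "vec_norm2 (A *\<^sub>v v) / r \<le> spec_norm A"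
    using r by (simp add: vec_norm2_smult norm_divide)
  then show ?thesis using r unfolding r_def by (simp add: pos_divide_le_eq)
qed

lemma spec_norm_le:
  assumes "0 \<le> c" and "\<And>v. v \<in> carrier_vec (dim_col A) \<Longrightarrow> vec_norm2 (A *\<^sub>v v) \<le> c * vec_norm2 v"
  shows "spec_norm A \<le> c"
  unfolding spec_norm_def
proof (rule cSup_least)
  have "0\<^sub>v (dim_col A) \<in> carrier_vec (dim_col A) \<and> vec_norm2 (0\<^sub>v (dim_col A) :: complex vec) \<le> 1"
    by simp
  then show "{vec_norm2 (A *\<^sub>v v) | v. v \<in> carrier_vec (dim_col A) \<and> vec_norm2 v \<le> 1} \<noteq> {}"
    by blast
next
  fix x assume "x \<in> {vec_norm2 (A *\<^sub>v v) | v. v \<in> carrier_vec (dim_col A) \<and> vec_norm2 v \<le> 1}"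
  then obtain v where v: "v \<in> carrier_vec (dim_col A)" "vec_norm2 v \<le> 1" "x = vec_norm2 (A *\<^sub>v v)"
    by auto
  have "x \<le> c * vec_norm2 v" using assms(2)[OF v(1)] v(3) by simp
  also have "\<dots> \<le> c" using v(2) assms(1) by (simp add: mult_left_le)
  finally show "x \<le> c" .
qed

lemma spec_norm_ge_eigenvalue:
  assumes "A \<in> carrier_mat n n" and "eigenvector A v c"
  shows "cmod c \<le> spec_norm A"
proof -
  have v: "v \<in> carrier_vec n" "v \<noteq> 0\<^sub>v n" "A *\<^sub>v v = c \<cdot>\<^sub>v v"
    using assms unfolding eigenvector_def by auto
  then have pos: "0 < vec_norm2 v"
    using vec_norm2_nonneg[of v] vec_norm2_eq_0_iff[of v] by (auto simp: order_less_le)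
  have "cmod c * vec_norm2 v \<le> spec_norm A * vec_norm2 v"
    using spec_norm_mult_vec_le[of v A] v assms(1) by (simp add: vec_norm2_smult)
  with pos show ?thesis by simp
qed

lemma spec_norm_zero_mat: "spec_norm (0\<^sub>m n m) = 0"
  using spec_norm_nonneg[of "0\<^sub>m n m"]
  by (intro antisym spec_norm_le) (auto simp: vec_norm2_def)

lemma dim_row_pos_if_spec_norm_pos: "0 < spec_norm A \<Longrightarrow> 0 < dim_row A"
  using spec_norm_le[of 0 A] by (fastforce simp: vec_norm2_def)

lemma spec_norm_add_le:
  assumes "A \<in> carrier_mat n m" and "B \<in> carrier_mat n m"
  shows "spec_norm (A + B) \<le> spec_norm A + spec_norm B"
proof (rule spec_norm_le)
  show "0 \<le> spec_norm A + spec_norm B" by (simp add: spec_norm_nonneg)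
  fix v :: "complex vec" assume "v \<in> carrier_vec (dim_col (A + B))"
  then have v: "v \<in> carrier_vec m" using assms by simp
  have "vec_norm2 ((A + B) *\<^sub>v v) = vec_norm2 (A *\<^sub>v v + B *\<^sub>v v)"
    using assms v by (simp add: add_mult_distrib_mat_vec)
  also have "\<dots> \<le> vec_norm2 (A *\<^sub>v v) + vec_norm2 (B *\<^sub>v v)"
    using assms by (intro vec_norm2_add_le) simp
  also have "\<dots> \<le> spec_norm A * vec_norm2 v + spec_norm B * vec_norm2 v"
    using assms v by (intro add_mono spec_norm_mult_vec_le) auto
  finally show "vec_norm2 ((A + B) *\<^sub>v v) \<le> (spec_norm A + spec_norm B) * vec_norm2 v"
    by (simp add: distrib_right)
qed

lemma spec_norm_mult_le:
  assumes A: "A \<in> carrier_mat n m" and B: "B \<in> carrier_mat m p"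
  shows "spec_norm (A * B) \<le> spec_norm A * spec_norm B"
proof (rule spec_norm_le)
  show "0 \<le> spec_norm A * spec_norm B" by (simp add: spec_norm_nonneg)
  fix v :: "complex vec" assume "v \<in> carrier_vec (dim_col (A * B))"
  then have v: "v \<in> carrier_vec p" using B by simp
  have "vec_norm2 ((A * B) *\<^sub>v v) = vec_norm2 (A *\<^sub>v (B *\<^sub>v v))"
    using A B v by simp
  also have "\<dots> \<le> spec_norm A * vec_norm2 (B *\<^sub>v v)"
    using A B v by (intro spec_norm_mult_vec_le) simp
  also have "\<dots> \<le> spec_norm A * (spec_norm B * vec_norm2 v)"
    using B v by (intro mult_left_mono spec_norm_mult_vec_le spec_norm_nonneg) simp
  finally show "vec_norm2 ((A * B) *\<^sub>v v) \<le> spec_norm A * spec_norm B * vec_norm2 v"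
    by (simp add: mult.assoc)
qed

lemma spec_norm_one_mat_le: "spec_norm (1\<^sub>m n) \<le> 1"
  by (rule spec_norm_le) simp_all

lemma spec_norm_pow_mat_le:
  assumes "A \<in> carrier_mat n n"
  shows "spec_norm (A ^\<^sub>m m) \<le> spec_norm A ^ m"
proof (induction m)
  case 0
  then show ?case by (simp add: spec_norm_one_mat_le)
next
  case (Suc m)
  have "spec_norm (A ^\<^sub>m Suc m) \<le> spec_norm (A ^\<^sub>m m) * spec_norm A"
    using assms by (simp add: spec_norm_mult_le[of _ n n _ n])
  also have "\<dots> \<le> spec_norm A ^ m * spec_norm A"
    using Suc.IH by (simp add: mult_right_mono spec_norm_nonneg)
  finally show ?case by (simp add: mult.commute)
qed

lemma smult_one_mat_mult_vec:
  fixes c :: "'a :: comm_ring_1"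
  assumes "v \<in> carrier_vec n"
  shows "(c \<cdot>\<^sub>m 1\<^sub>m n) *\<^sub>v v = c \<cdot>\<^sub>v v"
proof (rule eq_vecI)
  fix i assume "i < dim_vec (c \<cdot>\<^sub>v v)"
  with assms have i: "i < n" by simp
  then have "row (c \<cdot>\<^sub>m 1\<^sub>m n) i = c \<cdot>\<^sub>v unit_vec n i" by simp
  with i assms show "((c \<cdot>\<^sub>m 1\<^sub>m n) *\<^sub>v v) $ i = (c \<cdot>\<^sub>v v) $ i" by simp
qed (use assms in simp)

lemma eigenvector_smult_one_mat: "0 < n \<Longrightarrow> eigenvector (c \<cdot>\<^sub>m 1\<^sub>m n) (unit_vec n 0) c"
  unfolding eigenvector_def by (simp add: smult_one_mat_mult_vec)

lemma spec_norm_smult_one_mat: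
  assumes "0 < n"
  shows "spec_norm (c \<cdot>\<^sub>m 1\<^sub>m n) = cmod c"
proof (rule antisym)
  show "spec_norm (c \<cdot>\<^sub>m 1\<^sub>m n) \<le> cmod c"
    by (rule spec_norm_le) (auto simp: smult_one_mat_mult_vec vec_norm2_smult)
  show "cmod c \<le> spec_norm (c \<cdot>\<^sub>m 1\<^sub>m n)"
    by (rule spec_norm_ge_eigenvalue[OF smult_carrier_mat[OF one_carrier_mat] eigenvector_smult_one_mat[OF assms]])
qed

definition ones_vec :: "nat \<Rightarrow> complex vec" where
  "ones_vec n = vec n (\<lambda>_. 1)"

lemma ones_vec_carrier [simp]: "ones_vec n \<in> carrier_vec n"
  by (simp add: ones_vec_def)

lemma dim_ones_vec [simp]: "dim_vec (ones_vec n) = n"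
  by (simp add: ones_vec_def)

lemma index_ones_vec [simp]: "i < n \<Longrightarrow> ones_vec n $ i = 1"
  by (simp add: ones_vec_def)

lemma vec_norm2_ones_vec: "vec_norm2 (ones_vec n) = sqrt n"
  by (simp add: vec_norm2_def ones_vec_def)

lemma mult_ones_vec_index:
  "A \<in> carrier_mat n m \<Longrightarrow> i < n \<Longrightarrow> (A *\<^sub>v ones_vec m) $ i = (\<Sum>j<m. A $$ (i, j))"
  by (subst mult_mat_vec_index_sum) auto

lemma eigenvector_ones_vec_if_gen_row_stochastic:
  assumes "gen_row_stochastic n d A" and "0 < n"
  shows "eigenvector A (ones_vec n) d"
proof -
  have A: "A \<in> carrier_mat n n" and rows: "\<forall>i<n. (\<Sum>j<n. A $$ (i, j)) = d"
    using assms(1) unfolding gen_row_stochastic_def by auto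
  have "A *\<^sub>v ones_vec n = d \<cdot>\<^sub>v ones_vec n"
  proof (rule eq_vecI)
    fix i assume "i < dim_vec (d \<cdot>\<^sub>v ones_vec n)"
    then have "i < n" by simp
    with A rows show "(A *\<^sub>v ones_vec n) $ i = (d \<cdot>\<^sub>v ones_vec n) $ i"
      by (simp add: mult_ones_vec_index del: index_mult_mat_vec)
  qed (use A in simp)
  moreover have "ones_vec n \<noteq> 0\<^sub>v n"
    using assms(2) by (metis index_ones_vec index_zero_vec(1) zero_neq_one)
  ultimately show ?thesis
    using A unfolding eigenvector_def by simp
qed

lemma eq_mean_if_sum_norm_sq_le:
  fixes z :: "nat \<Rightarrow> complex"
  assumes sum: "(\<Sum>i<n. z i) = of_nat n * c"
    and sum_sq: "(\<Sum>i<n. (cmod (z i))\<^sup>2) \<le> real n * (cmod c)\<^sup>2"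
    and "i < n"
  shows "z i = c"
proof -
  have expand: "(cmod (z i - c))\<^sup>2 = (cmod (z i))\<^sup>2 - 2 * Re (z i * cnj c) + (cmod c)\<^sup>2" for i
    by (simp only: cmod_power2) (simp add: power2_eq_square algebra_simps)
  have "(\<Sum>i<n. Re (z i * cnj c)) = Re ((\<Sum>i<n. z i) * cnj c)"
    by (simp add: sum_distrib_right)
  also have "\<dots> = real n * (cmod c)\<^sup>2"
    using sum by (simp add: complex_mult_cnj cmod_power2 mult.assoc)
  finally have "(\<Sum>i<n. (cmod (z i - c))\<^sup>2) = (\<Sum>i<n. (cmod (z i))\<^sup>2) - real n * (cmod c)\<^sup>2"
    unfolding expand by (simp add: sum.distrib sum_subtractf sum_distrib_left[symmetric])
  with sum_sq have "(\<Sum>i<n. (cmod (z i - c))\<^sup>2) \<le> 0"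
    by simp
  then have "(\<Sum>i<n. (cmod (z i - c))\<^sup>2) = 0"
    by (intro antisym sum_nonneg) simp_all
  with assms(3) show ?thesis
    by (simp add: sum_nonneg_eq_0_iff)
qed

lemma row_sums_norm_sq_le:
  assumes A: "A \<in> carrier_mat n m"
  shows "(\<Sum>i<n. (cmod (\<Sum>j<m. A $$ (i, j)))\<^sup>2) \<le> real m * (spec_norm A)\<^sup>2"
proof -
  have "(\<Sum>i<n. (cmod (\<Sum>j<m. A $$ (i, j)))\<^sup>2) = (vec_norm2 (A *\<^sub>v ones_vec m))\<^sup>2"
    using A unfolding vec_norm2_power2 by (auto simp: mult_ones_vec_index simp del: index_mult_mat_vec)
  also have "\<dots> \<le> (spec_norm A * sqrt m)\<^sup>2"
    using A spec_norm_mult_vec_le[of "ones_vec m" A]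
    by (intro power_mono) (auto simp: vec_norm2_ones_vec vec_norm2_nonneg)
  finally show ?thesis by (simp add: power_mult_distrib mult.commute)
qed

lemma col_sums_norm_sq_le:
  assumes A: "A \<in> carrier_mat n m"
  shows "(\<Sum>j<m. (cmod (\<Sum>i<n. A $$ (i, j)))\<^sup>2) \<le> real n * (spec_norm A)\<^sup>2"
proof -
  define c where "c j = (\<Sum>i<n. A $$ (i, j))" for j
  define S where "S = (\<Sum>j<m. (cmod (c j))\<^sup>2)"
  define w where "w = vec m (\<lambda>j. cnj (c j))"
  have S_nonneg: "0 \<le> S" unfolding S_def by (simp add: sum_nonneg)
  have w: "w \<in> carrier_vec m" "vec_norm2 w = sqrt S"
    unfolding w_def S_def vec_norm2_def by auto
  have "complex_of_real S = (\<Sum>j<m. c j * cnj (c j))"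
    unfolding S_def by (simp add: complex_mult_cnj cmod_power2)
  also have "\<dots> = (\<Sum>i<n. (A *\<^sub>v w) $ i)"
    using A by (simp add: mult_mat_vec_index_sum w_def c_def sum_distrib_right
      del: index_mult_mat_vec) (rule sum.swap)
  finally have "S = cmod (\<Sum>i<n. (A *\<^sub>v w) $ i)"
    using S_nonneg by (metis norm_of_real abs_of_nonneg)
  also have "\<dots> \<le> sqrt n * vec_norm2 (A *\<^sub>v w)"
    using norm_sum_vec_le[of "A *\<^sub>v w"] A by simp
  also have "\<dots> \<le> sqrt n * (spec_norm A * sqrt S)"
    using A w spec_norm_mult_vec_le[of w A] by (intro mult_left_mono) auto
  finally have "sqrt S * sqrt S \<le> (sqrt n * spec_norm A) * sqrt S"
    using S_nonneg by (simp add: mult.assoc)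
  then have "sqrt S \<le> sqrt n * spec_norm A"
  proof (cases "S = 0")
    case False
    with S_nonneg have "0 < sqrt S" by simp
    with \<open>sqrt S * sqrt S \<le> (sqrt n * spec_norm A) * sqrt S\<close> show ?thesis
      by (rule mult_right_le_imp_le)
  qed (simp add: spec_norm_nonneg)
  then have "(sqrt S)\<^sup>2 \<le> (sqrt n * spec_norm A)\<^sup>2"
    using S_nonneg by (intro power_mono) simp_all
  then show ?thesis
    using S_nonneg by (simp add: S_def c_def power_mult_distrib)
qed

lemma gen_doubly_stochastic_if_sum_entries:
  assumes A: "A \<in> carrier_mat n n" and norm: "spec_norm A \<le> cmod d"
    and total: "(\<Sum>i<n. \<Sum>j<n. A $$ (i, j)) = of_nat n * d"
  shows "gen_doubly_stochastic n d A"
proof -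
  have norm_sq: "real n * (spec_norm A)\<^sup>2 \<le> real n * (cmod d)\<^sup>2"
    using norm by (intro mult_left_mono power_mono spec_norm_nonneg) simp_all
  have total_by_cols: "(\<Sum>j<n. \<Sum>i<n. A $$ (i, j)) = of_nat n * d"
    by (subst sum.swap) (rule total)
  have "(\<Sum>j<n. A $$ (i, j)) = d" if "i < n" for i
    using total order_trans[OF row_sums_norm_sq_le[OF A] norm_sq] that
    by (rule eq_mean_if_sum_norm_sq_le[where z = "\<lambda>i. \<Sum>j<n. A $$ (i, j)"])
  moreover have "(\<Sum>i<n. A $$ (i, j)) = d" if "j < n" for j
    using total_by_cols order_trans[OF col_sums_norm_sq_le[OF A] norm_sq] that
    by (rule eq_mean_if_sum_norm_sq_le[where z = "\<lambda>j. \<Sum>i<n. A $$ (i, j)"])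
  ultimately show ?thesis
    using A unfolding gen_doubly_stochastic_def gen_row_stochastic_def gen_col_stochastic_def by blast
qed

lemma gen_doubly_stochastic_if_row_or_col_stochastic:
  assumes "gen_row_stochastic n d A \<or> gen_col_stochastic n d A" and "spec_norm A \<le> cmod d"
  shows "gen_doubly_stochastic n d A"
proof (rule gen_doubly_stochastic_if_sum_entries)
  show A: "A \<in> carrier_mat n n"
    using assms(1) unfolding gen_row_stochastic_def gen_col_stochastic_def by blast
  show "(\<Sum>i<n. \<Sum>j<n. A $$ (i, j)) = of_nat n * d"
    using assms(1)
  proof
    assume "gen_row_stochastic n d A"
    then show ?thesis by (simp add: gen_row_stochastic_def)
  next
    assume "gen_col_stochastic n d A"
    then show ?thesis by (subst sum.swap) (simp add: gen_col_stochastic_def)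
  qed
qed (fact assms(2))

lemma mat_sum_carrier [simp]: "mat_sum n k D \<in> carrier_mat n n"
  by (simp add: mat_sum_def)

lemma mat_sum_0: "mat_sum n 0 D = 0\<^sub>m n n"
  by (auto simp: mat_sum_def)

lemma mat_sum_Suc: "D k \<in> carrier_mat n n \<Longrightarrow> mat_sum n (Suc k) D = mat_sum n k D + D k"
  by (auto simp: mat_sum_def)

lemma spec_norm_mat_sum_le:
  assumes "\<And>l. l < k \<Longrightarrow> D l \<in> carrier_mat n n"
  shows "spec_norm (mat_sum n k D) \<le> (\<Sum>l<k. spec_norm (D l))"
  using assms
proof (induction k)
  case 0
  then show ?case by (simp add: mat_sum_0 spec_norm_zero_mat)
next
  case (Suc k)
  have "spec_norm (mat_sum n (Suc k) D) \<le> spec_norm (mat_sum n k D) + spec_norm (D k)"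
    using Suc.prems by (simp add: mat_sum_Suc spec_norm_add_le[of _ n n])
  also have "\<dots> \<le> (\<Sum>l<Suc k. spec_norm (D l))"
    using Suc by simp
  finally show ?case .
qed

lemma gen_doubly_stochastic_mat_sum:
  assumes "\<And>l. l < k \<Longrightarrow> gen_doubly_stochastic n (d l) (D l)"
  shows "gen_doubly_stochastic n (\<Sum>l<k. d l) (mat_sum n k D)"
proof -
  have "(\<Sum>j<n. mat_sum n k D $$ (i, j)) = (\<Sum>l<k. d l)" if "i < n" for i
  proof -
    have "(\<Sum>j<n. mat_sum n k D $$ (i, j)) = (\<Sum>l<k. \<Sum>j<n. D l $$ (i, j))"
      using that by (simp add: mat_sum_def) (rule sum.swap)
    also have "\<dots> = (\<Sum>l<k. d l)"
      using assms that by (intro sum.cong) (auto simp: gen_doubly_stochastic_def gen_row_stochastic_def)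
    finally show ?thesis .
  qed
  moreover have "(\<Sum>i<n. mat_sum n k D $$ (i, j)) = (\<Sum>l<k. d l)" if "j < n" for j
  proof -
    have "(\<Sum>i<n. mat_sum n k D $$ (i, j)) = (\<Sum>l<k. \<Sum>i<n. D l $$ (i, j))"
      using that by (simp add: mat_sum_def) (rule sum.swap)
    also have "\<dots> = (\<Sum>l<k. d l)"
      using assms that by (intro sum.cong) (auto simp: gen_doubly_stochastic_def gen_col_stochastic_def)
    finally show ?thesis .
  qed
  ultimately show ?thesis
    unfolding gen_doubly_stochastic_def gen_row_stochastic_def gen_col_stochastic_def by simp
qed

lemma block_structure_carrier:
  assumes "is_block_structure n ks ns" and "\<Delta> \<in> block_structure ks ns"
  shows "\<Delta> \<in> carrier_mat n n"
proof -
  obtain \<delta> Ds where \<Delta>: "\<Delta> = diag_block_mat (map (\<lambda>i. \<delta> i \<cdot>\<^sub>m 1\<^sub>m (ks ! i)) [0..<length ks] @ Ds)"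
    and Ds: "length Ds = length ns" "\<forall>j<length ns. Ds ! j \<in> carrier_mat (ns ! j) (ns ! j)"
    using assms(2) unfolding block_structure_def by blast
  have "map dim_row Ds = ns" "map dim_col Ds = ns"
    using Ds by (auto intro!: nth_equalityI)
  moreover have "map (\<lambda>i. ks ! i) [0..<length ks] = ks"
    by (rule map_nth)
  ultimately show ?thesis
    using assms(1) unfolding \<Delta> is_block_structure_def carrier_mat_def
    by (simp add: dim_diag_block_mat comp_def)
qed

lemma diag_block_mat_smult_one_mat:
  fixes c :: "'a :: comm_ring_1"
  shows "diag_block_mat (map (\<lambda>k. c \<cdot>\<^sub>m 1\<^sub>m k) ks) = c \<cdot>\<^sub>m 1\<^sub>m (sum_list ks)"
  by (induction ks) (auto intro!: eq_matI simp: Let_def)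

lemma smult_one_mat_in_block_structure:
  "c \<cdot>\<^sub>m 1\<^sub>m (sum_list ks + sum_list ns) \<in> block_structure ks ns"
proof -
  define Ds where "Ds = map (\<lambda>j. c \<cdot>\<^sub>m 1\<^sub>m (ns ! j)) [0..<length ns]"
  have "map (\<lambda>i. c \<cdot>\<^sub>m 1\<^sub>m (ks ! i)) [0..<length ks] @ Ds = map (\<lambda>k. c \<cdot>\<^sub>m 1\<^sub>m k) (ks @ ns)"
    unfolding Ds_def by (intro nth_equalityI) (auto simp: nth_append)
  then have "diag_block_mat (map (\<lambda>i. c \<cdot>\<^sub>m 1\<^sub>m (ks ! i)) [0..<length ks] @ Ds)
      = c \<cdot>\<^sub>m 1\<^sub>m (sum_list ks + sum_list ns)"
    by (simp only: diag_block_mat_smult_one_mat sum_list_append)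
  moreover have "length Ds = length ns" "\<forall>j<length ns. Ds ! j \<in> carrier_mat (ns ! j) (ns ! j)"
    unfolding Ds_def by auto
  ultimately show ?thesis
    unfolding block_structure_def by (intro CollectI exI[of _ "\<lambda>_. c"] exI[of _ Ds]) simp
qed

lemma one_le_spec_norm_mult_if_singular:
  assumes M: "M \<in> carrier_mat n n" and \<Delta>: "\<Delta> \<in> carrier_mat n n"
    and singular: "det (1\<^sub>m n + M * \<Delta>) = 0"
  shows "1 \<le> spec_norm M * spec_norm \<Delta>"
proof -
  obtain x where x: "x \<in> carrier_vec n" "x \<noteq> 0\<^sub>v n" and "(1\<^sub>m n + M * \<Delta>) *\<^sub>v x = 0\<^sub>v n"
    using singular det_0_iff_vec_prod_zero[of "1\<^sub>m n + M * \<Delta>" n] M \<Delta> by auto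
  then have sum0: "x + M *\<^sub>v (\<Delta> *\<^sub>v x) = 0\<^sub>v n"
    using M \<Delta> by (simp add: add_mult_distrib_mat_vec[of _ n n])
  have "M *\<^sub>v (\<Delta> *\<^sub>v x) = - x"
  proof (rule eq_vecI)
    fix i assume "i < dim_vec (- x)"
    then have i: "i < n" using x(1) by simp
    have "x $ i + (M *\<^sub>v (\<Delta> *\<^sub>v x)) $ i = 0"
      using arg_cong[OF sum0, of "\<lambda>v. v $ i"] i x(1) M by simp
    then show "(M *\<^sub>v (\<Delta> *\<^sub>v x)) $ i = (- x) $ i"
      using i x(1) by (simp add: eq_neg_iff_add_eq_0 add.commute)
  qed (use M x(1) in simp)
  then have "vec_norm2 x = vec_norm2 (M *\<^sub>v (\<Delta> *\<^sub>v x))"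
    by (simp add: vec_norm2_uminus)
  also have "\<dots> \<le> spec_norm M * vec_norm2 (\<Delta> *\<^sub>v x)"
    using M \<Delta> x(1) by (intro spec_norm_mult_vec_le) simp
  also have "\<dots> \<le> spec_norm M * (spec_norm \<Delta> * vec_norm2 x)"
    using \<Delta> x(1) by (intro mult_left_mono spec_norm_mult_vec_le spec_norm_nonneg) simp
  finally have "1 * vec_norm2 x \<le> (spec_norm M * spec_norm \<Delta>) * vec_norm2 x"
    by (simp add: mult.assoc)
  moreover have "0 < vec_norm2 x"
    using x vec_norm2_nonneg[of x] vec_norm2_eq_0_iff[of x] by (auto simp: order_less_le)
  ultimately show ?thesis
    by (rule mult_right_le_imp_le)
qed

lemma eigenvalue_perturbation_singular:
  fixes M :: "'a :: field mat"
  assumes M: "M \<in> carrier_mat n n" and ev: "eigenvector M v c" and "c \<noteq> 0"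
  shows "det (1\<^sub>m n + M * ((- inverse c) \<cdot>\<^sub>m 1\<^sub>m n)) = 0"
proof -
  have v: "v \<in> carrier_vec n" "v \<noteq> 0\<^sub>v n" "M *\<^sub>v v = c \<cdot>\<^sub>v v"
    using ev M unfolding eigenvector_def by auto
  have "(1\<^sub>m n + M * ((- inverse c) \<cdot>\<^sub>m 1\<^sub>m n)) *\<^sub>v v
      = v + M *\<^sub>v (((- inverse c) \<cdot>\<^sub>m 1\<^sub>m n) *\<^sub>v v)"
    using M v(1)
    by (simp add: add_mult_distrib_mat_vec[of _ n n] assoc_mult_mat_vec[of M n n "(- inverse c) \<cdot>\<^sub>m 1\<^sub>m n" n])
  also have "\<dots> = v + (- inverse c) \<cdot>\<^sub>v (M *\<^sub>v v)"
    using v(1) by (simp add: smult_one_mat_mult_vec mult_mat_vec[OF M v(1)])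
  also have "\<dots> = 0\<^sub>v n"
    using v(1) \<open>c \<noteq> 0\<close> by (intro eq_vecI) (auto simp: v(3))
  finally show ?thesis
    using M v(1,2) by (subst det_0_iff_vec_prod_zero) auto
qed

lemma ssv_block_structure_eq_spec_norm:
  assumes blk: "is_block_structure n ks ns" and M: "M \<in> carrier_mat n n"
    and ev: "eigenvector M v c" and c: "cmod c = spec_norm M" "c \<noteq> 0"
  shows "ssv (block_structure ks ns) M = spec_norm M"
proof -
  let ?singular = "\<lambda>\<Delta>. det (1\<^sub>m (dim_row M) + M * \<Delta>) = 0"
  define \<Delta>\<^sub>0 where "\<Delta>\<^sub>0 = (- inverse c) \<cdot>\<^sub>m 1\<^sub>m n"
  have n: "0 < n"
    using M ev eigenvalue_imp_nonzero_dim unfolding eigenvalue_def by blast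
  have \<Delta>\<^sub>0: "\<Delta>\<^sub>0 \<in> block_structure ks ns" "?singular \<Delta>\<^sub>0"
    using blk smult_one_mat_in_block_structure eigenvalue_perturbation_singular[OF M ev c(2)] M
    unfolding \<Delta>\<^sub>0_def is_block_structure_def by auto
  have norm_\<Delta>\<^sub>0: "spec_norm \<Delta>\<^sub>0 = inverse (spec_norm M)"
    using n c unfolding \<Delta>\<^sub>0_def by (simp add: spec_norm_smult_one_mat norm_inverse)
  have "inverse (spec_norm M) \<le> spec_norm \<Delta>"
    if "\<Delta> \<in> block_structure ks ns" "?singular \<Delta>" for \<Delta>
  proof -
    have "1 \<le> spec_norm M * spec_norm \<Delta>"
      using that M block_structure_carrier[OF blk] by (intro one_le_spec_norm_mult_if_singular) auto
    moreover have "0 < spec_norm M"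
      using c by (metis zero_less_norm_iff)
    ultimately show ?thesis
      by (simp add: field_simps)
  qed
  then have "Inf {spec_norm \<Delta> | \<Delta>. \<Delta> \<in> block_structure ks ns \<and> ?singular \<Delta>} = inverse (spec_norm M)"
    using \<Delta>\<^sub>0 norm_\<Delta>\<^sub>0 by (intro cInf_eq_minimum) (auto intro!: exI[of _ "\<Delta>\<^sub>0"])
  then show ?thesis
    using \<Delta>\<^sub>0 unfolding ssv_def by auto
qed

lemma ssv_block_structure_pow_mat:
  assumes blk: "is_block_structure n ks ns" and M: "M \<in> carrier_mat n n"
    and ev: "eigenvector M v c" and c: "cmod c = spec_norm M" "c \<noteq> 0"
  shows "ssv (block_structure ks ns) (M ^\<^sub>m m) = spec_norm M ^ m"
proof -
  have ev_pow: "eigenvector (M ^\<^sub>m m) v (c ^ m)"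
    using ev eigenvector_pow[OF M ev] M unfolding eigenvector_def by simp
  have "spec_norm (M ^\<^sub>m m) = spec_norm M ^ m"
    using spec_norm_pow_mat_le[OF M] spec_norm_ge_eigenvalue[OF pow_carrier_mat[OF M] ev_pow] c
    by (intro antisym) (simp_all add: norm_power)
  with ssv_block_structure_eq_spec_norm[OF blk pow_carrier_mat[OF M] ev_pow] c show ?thesis
    by (simp add: norm_power)
qed

theorem corollary2p6:
  fixes n k :: nat and \<delta>s :: "nat \<Rightarrow> real" and D :: "nat \<Rightarrow> complex mat"
  assumes "k \<ge> 1"
    and pos: "\<forall>i<k. \<delta>s i > 0"
    and stoch: "\<forall>i<k. gen_row_stochastic n (complex_of_real (\<delta>s i)) (D i)
                     \<or> gen_col_stochastic n (complex_of_real (\<delta>s i)) (D i)"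
    and norms: "\<forall>i<k. spec_norm (D i) = \<delta>s i"
  shows "gen_doubly_stochastic n (complex_of_real (\<Sum>i<k. \<delta>s i)) (mat_sum n k D)
         \<and> spec_norm (mat_sum n k D) = (\<Sum>i<k. \<delta>s i)
         \<and> (\<forall>m ks ns. m \<ge> 1 \<longrightarrow> is_block_structure n ks ns \<longrightarrow>
              ssv (block_structure ks ns) (mat_sum n k D ^\<^sub>m m) = (\<Sum>i<k. \<delta>s i) ^ m)"
proof -
  define \<delta> where "\<delta> = (\<Sum>i<k. \<delta>s i)"
  define S where "S = mat_sum n k D"
  have S: "S \<in> carrier_mat n n"
    by (simp add: S_def)
  have doubly: "gen_doubly_stochastic n (complex_of_real (\<delta>s l)) (D l)" if "l < k" for l
    using that stoch pos norms by (intro gen_doubly_stochastic_if_row_or_col_stochastic) auto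
  then have S_doubly: "gen_doubly_stochastic n (complex_of_real \<delta>) S"
    unfolding S_def \<delta>_def of_real_sum by (rule gen_doubly_stochastic_mat_sum)
  have carrier: "D l \<in> carrier_mat n n" if "l < k" for l
    using doubly[OF that] unfolding gen_doubly_stochastic_def gen_row_stochastic_def by blast
  have "0 < n"
    using dim_row_pos_if_spec_norm_pos[of "D 0"] carrier[of 0] pos norms assms(1) by auto
  then have eigen: "eigenvector S (ones_vec n) \<delta>"
    using S_doubly unfolding gen_doubly_stochastic_def by (blast intro: eigenvector_ones_vec_if_gen_row_stochastic)
  have "0 < \<delta>"
    unfolding \<delta>_def using assms(1) pos by (intro sum_pos) (auto simp: lessThan_empty_iff)
  have "spec_norm S \<le> \<delta>"
    using spec_norm_mat_sum_le[of k D n] carrier norms unfolding S_def \<delta>_def by simp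
  with spec_norm_ge_eigenvalue[OF S eigen] \<open>0 < \<delta>\<close> have norm_S: "spec_norm S = \<delta>"
    by (intro antisym) auto
  moreover have "ssv (block_structure ks ns) (S ^\<^sub>m m) = \<delta> ^ m"
    if "is_block_structure n ks ns" for m ks ns
    using ssv_block_structure_pow_mat[OF that S eigen] norm_S \<open>0 < \<delta>\<close> by simp
  ultimately show ?thesis
    using S_doubly unfolding S_def \<delta>_def by blast
qed

end
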